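(* Let $P$ be a countable multiset of primes, $G=\bigoplus_{p\in P}\mathbb{F}_p$, let $X$ be an ergodic $G$-system, let $d\geq 0$, and let $q:G\times X\to S^1$ be a phase polynomial of degree $<d$ which is also a cocycle. Then for every $g\in G$, $q(g,\cdot)$ takes values in $C_m$, where $m=n^d$ and $n$ is the order of $g$.
   Context: $C_m$ is the group of $m$-th roots of unity. A $G$-system is a compact metrizable probability space with measure-preserving $G$-action $(T_g)$; ergodic: only constants invariant. $q$ is a phase polynomial of degree $<d$ if for each $g$, $\Delta_{h_1}\cdots\Delta_{h_d}q(g,\cdot)=1$ a.e. for all $h_i\in G$, where $\Delta_h\phi=(\phi\circ T_h)/\phi$. $q$ is a cocycle if $q(g+g',x)=q(g,x)q(g',T_gx)$. *)

theory Defs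
  imports "HOL-Probability.Probability"
begin

text \<open>The countable multiset of primes P is given by a countable index set I of naturals
  together with a labelling p : I -> primes (repetitions allowed).\<close>

definition dsum_carrier :: "nat set \<Rightarrow> (nat \<Rightarrow> nat) \<Rightarrow> (nat \<Rightarrow> nat) set" where
  "dsum_carrier I p = {g. (\<forall>i. i \<notin> I \<longrightarrow> g i = 0) \<and> (\<forall>i\<in>I. g i < p i) \<and> finite {i. g i \<noteq> 0}}"

definition dsum_add :: "nat set \<Rightarrow> (nat \<Rightarrow> nat) \<Rightarrow> (nat \<Rightarrow> nat) \<Rightarrow> (nat \<Rightarrow> nat) \<Rightarrow> (nat \<Rightarrow> nat)" where
  "dsum_add I p g h = (\<lambda>i. if i \<in> I then (g i + h i) mod p i else 0)"

definition dsum_zero :: "nat \<Rightarrow> nat" where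
  "dsum_zero = (\<lambda>i. 0)"

definition dsum_pow :: "nat set \<Rightarrow> (nat \<Rightarrow> nat) \<Rightarrow> nat \<Rightarrow> (nat \<Rightarrow> nat) \<Rightarrow> (nat \<Rightarrow> nat)" where
  "dsum_pow I p n g = (\<lambda>i. if i \<in> I then (n * g i) mod p i else 0)"

definition dsum_order :: "nat set \<Rightarrow> (nat \<Rightarrow> nat) \<Rightarrow> (nat \<Rightarrow> nat) \<Rightarrow> nat" where
  "dsum_order I p g = (LEAST n. n > 0 \<and> dsum_pow I p n g = dsum_zero)"

definition mp_action :: "nat set \<Rightarrow> (nat \<Rightarrow> nat) \<Rightarrow> 'a measure \<Rightarrow> ((nat \<Rightarrow> nat) \<Rightarrow> 'a \<Rightarrow> 'a) \<Rightarrow> bool" where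
  "mp_action I p M T \<longleftrightarrow>
     (\<forall>g\<in>dsum_carrier I p. T g \<in> measurable M M \<and> distr M M (T g) = M) \<and>
     (\<forall>x\<in>space M. T dsum_zero x = x) \<and>
     (\<forall>g\<in>dsum_carrier I p. \<forall>h\<in>dsum_carrier I p. \<forall>x\<in>space M.
         T (dsum_add I p g h) x = T g (T h x))"

definition ergodic_action :: "nat set \<Rightarrow> (nat \<Rightarrow> nat) \<Rightarrow> 'a measure \<Rightarrow> ((nat \<Rightarrow> nat) \<Rightarrow> 'a \<Rightarrow> 'a) \<Rightarrow> bool" where
  "ergodic_action I p M T \<longleftrightarrow>
     (\<forall>f \<in> borel_measurable M :: ('a \<Rightarrow> real) set.
        (\<forall>g\<in>dsum_carrier I p. AE x in M. f (T g x) = f x) \<longrightarrow> (\<exists>c. AE x in M. f x = c))"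

definition mderiv :: "((nat \<Rightarrow> nat) \<Rightarrow> 'a \<Rightarrow> 'a) \<Rightarrow> (nat \<Rightarrow> nat) \<Rightarrow> ('a \<Rightarrow> complex) \<Rightarrow> 'a \<Rightarrow> complex" where
  "mderiv T h \<phi> = (\<lambda>x. \<phi> (T h x) / \<phi> x)"

fun mderivs :: "((nat \<Rightarrow> nat) \<Rightarrow> 'a \<Rightarrow> 'a) \<Rightarrow> (nat \<Rightarrow> nat) list \<Rightarrow> ('a \<Rightarrow> complex) \<Rightarrow> 'a \<Rightarrow> complex" where
  "mderivs T [] \<phi> = \<phi>"
| "mderivs T (h # hs) \<phi> = mderiv T h (mderivs T hs \<phi>)"

definition phase_poly_lt :: "nat set \<Rightarrow> (nat \<Rightarrow> nat) \<Rightarrow> 'a measure \<Rightarrow> ((nat \<Rightarrow> nat) \<Rightarrow> 'a \<Rightarrow> 'a)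
     \<Rightarrow> nat \<Rightarrow> ((nat \<Rightarrow> nat) \<Rightarrow> 'a \<Rightarrow> complex) \<Rightarrow> bool" where
  "phase_poly_lt I p M T d q \<longleftrightarrow>
     (\<forall>g\<in>dsum_carrier I p. \<forall>hs. length hs = d \<and> set hs \<subseteq> dsum_carrier I p \<longrightarrow>
         (AE x in M. mderivs T hs (q g) x = 1))"

definition is_cocycle :: "nat set \<Rightarrow> (nat \<Rightarrow> nat) \<Rightarrow> 'a measure \<Rightarrow> ((nat \<Rightarrow> nat) \<Rightarrow> 'a \<Rightarrow> 'a)
     \<Rightarrow> ((nat \<Rightarrow> nat) \<Rightarrow> 'a \<Rightarrow> complex) \<Rightarrow> bool" where
  "is_cocycle I p M T q \<longleftrightarrow>
     (\<forall>g\<in>dsum_carrier I p. \<forall>g'\<in>dsum_carrier I p.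
         AE x in M. q (dsum_add I p g g') x = q g x * q g' (T g x))"

end

theory Submission
  imports Defs
begin

text \<open>Write \<open>S = T g\<close> and let \<open>n\<close> be the order of \<open>g\<close>, so that \<open>S\<^sup>n = id\<close>. The cocycle identity
  expands \<open>q(n g, x)\<close> into the orbit product \<open>\<Prod>j<n. q(g, S\<^sup>j x)\<close>, and \<open>q(n g, \<cdot>) = q(0, \<cdot>) = 1\<close>.
  Now induct on \<open>d\<close>: the derivative \<open>f' = \<Delta>\<^sub>g f\<close> again has orbit product \<open>1\<close> (the product
  telescopes along the periodic orbit), so by induction \<open>f'\<^sup>m = 1\<close> with \<open>m = n\<^sup>d\<^sup>-\<^sup>1\<close>. Thus \<open>f\<^sup>m\<close> is
  \<open>S\<close>-invariant, hence constant along orbits almost everywhere, and raising the orbit product to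
  the \<open>m\<close>-th power gives \<open>f\<^sup>m\<^sup>n = 1\<close>.\<close>

lemma AE_funpow_of_measure_preserving:
  assumes S: "S \<in> measurable M M" and preserving: "distr M M S = M"
    and P: "AE x in M. P x"
  shows "AE x in M. P ((S ^^ j) x)"
proof (induction j)
  case 0
  then show ?case using P by simp
next
  case (Suc j)
  have "AE x in distr M M S. P ((S ^^ j) x)"
    unfolding preserving by (rule Suc.IH)
  from AE_distrD[OF S this] show ?case
    by (simp add: funpow_swap1)
qed

lemma AE_funpow_invariant:
  assumes S: "S \<in> measurable M M" and preserving: "distr M M S = M"
    and invariant: "AE x in M. h (S x) = h x"
  shows "AE x in M. h ((S ^^ j) x) = h x"
proof (induction j)
  case 0
  then show ?case by simp
next
  case (Suc j)
  have "AE x in M. h (S ((S ^^ j) x)) = h ((S ^^ j) x)"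
    by (rule AE_funpow_of_measure_preserving[OF S preserving invariant])
  with Suc.IH show ?case
    by eventually_elim simp
qed

lemma orbit_prod_mderiv:
  fixes f :: "'a \<Rightarrow> complex"
  assumes S: "T g \<in> measurable M M" and x: "x \<in> space M"
    and periodic: "(T g ^^ n) x = x"
    and nonzero: "\<forall>y\<in>space M. f y \<noteq> 0"
  shows "(\<Prod>j<n. mderiv T g f ((T g ^^ j) x)) = 1"
proof -
  have orbit_nonzero: "f ((T g ^^ j) x) \<noteq> 0" for j
    using nonzero measurable_space[OF measurable_compose_n[OF S] x] by blast
  have "(\<Prod>j<n. mderiv T g f ((T g ^^ j) x)) = (\<Prod>j<n. f ((T g ^^ Suc j) x) / f ((T g ^^ j) x))"
    by (simp add: mderiv_def)
  also have "\<dots> = f ((T g ^^ n) x) / f x"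
    using prod_lessThan_telescope[where f = "\<lambda>j. f ((T g ^^ j) x)"] orbit_nonzero by simp
  finally show ?thesis
    using periodic orbit_nonzero[of 0] by simp
qed

lemma mderivs_replicate_Suc:
  "mderivs T (replicate d g) (mderiv T g f) = mderivs T (replicate (Suc d) g) f"
  by (induction d) simp_all

lemma mderivs_replicate_root_of_unity:
  fixes f :: "'a \<Rightarrow> complex"
  assumes S: "T g \<in> measurable M M" and preserving: "distr M M (T g) = M"
    and periodic: "\<forall>x\<in>space M. (T g ^^ n) x = x"
    and nonzero: "\<forall>x\<in>space M. f x \<noteq> 0"
    and derivative: "AE x in M. mderivs T (replicate d g) f x = 1"
    and orbit_prod: "AE x in M. (\<Prod>j<n. f ((T g ^^ j) x)) = 1"
  shows "AE x in M. f x ^ (n ^ d) = 1"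
  using nonzero derivative orbit_prod
proof (induction d arbitrary: f)
  case 0
  then show ?case by simp
next
  case (Suc d)
  let ?S = "T g" and ?m = "n ^ d"
  have derivative_nonzero: "\<forall>x\<in>space M. mderiv T g f x \<noteq> 0"
    using Suc.prems(1) measurable_space[OF S] by (simp add: mderiv_def)
  have "AE x in M. (\<Prod>j<n. mderiv T g f ((?S ^^ j) x)) = 1"
    using periodic Suc.prems(1) by (intro AE_I2 orbit_prod_mderiv[where T = T and g = g, OF S]) auto
  then have "AE x in M. mderiv T g f x ^ ?m = 1"
    using Suc.IH[OF derivative_nonzero] Suc.prems(2) by (simp add: mderivs_replicate_Suc)
  then have "AE x in M. f (?S x) ^ ?m = f x ^ ?m"
    using AE_space by eventually_elim (use Suc.prems(1) in \<open>simp add: mderiv_def power_divide\<close>)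
  then have "AE x in M. f ((?S ^^ j) x) ^ ?m = f x ^ ?m" for j
    by (rule AE_funpow_invariant[OF S preserving, where h = "\<lambda>x. f x ^ ?m"])
  then have "AE x in M. \<forall>j\<in>{..<n}. f ((?S ^^ j) x) ^ ?m = f x ^ ?m"
    by (intro AE_finite_allI) simp_all
  with Suc.prems(3) show ?case
  proof eventually_elim
    case (elim x)
    have "1 = (\<Prod>j<n. f ((?S ^^ j) x)) ^ ?m"
      using elim(1) by simp
    also have "\<dots> = (\<Prod>j<n. f ((?S ^^ j) x) ^ ?m)"
      by (rule prod_power_distrib)
    also have "\<dots> = f x ^ (n ^ Suc d)"
      using elim(2) by (simp add: power_mult[symmetric] mult.commute)
    finally show ?case by simp
  qed
qed

lemma dsum_carrier_modulus_pos:
  assumes "g \<in> dsum_carrier I p" and "i \<in> I"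
  shows "0 < p i"
  using assms by (auto simp: dsum_carrier_def)

lemma dsum_pow_in_carrier:
  assumes g: "g \<in> dsum_carrier I p"
  shows "dsum_pow I p k g \<in> dsum_carrier I p"
proof -
  have "{i. dsum_pow I p k g i \<noteq> 0} \<subseteq> {i. g i \<noteq> 0}"
    unfolding dsum_pow_def by (rule Collect_mono) (metis mod_0 mult_0_right)
  moreover have "finite {i. g i \<noteq> 0}"
    using g by (simp add: dsum_carrier_def)
  ultimately have "finite {i. dsum_pow I p k g i \<noteq> 0}"
    by (rule finite_subset)
  then show ?thesis
    using dsum_carrier_modulus_pos[OF g] by (simp add: dsum_carrier_def dsum_pow_def)
qed

lemma dsum_pow_0: "dsum_pow I p 0 g = dsum_zero"
  by (auto simp: dsum_pow_def dsum_zero_def)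

lemma dsum_pow_Suc: "dsum_pow I p (Suc k) g = dsum_add I p g (dsum_pow I p k g)"
  by (auto simp: dsum_pow_def dsum_add_def mod_add_right_eq)

lemma dsum_pow_Suc2: "dsum_pow I p (Suc k) g = dsum_add I p (dsum_pow I p k g) g"
  using mod_add_left_eq[of "k * g i" "p i" "g i" for i]
  by (auto simp: dsum_pow_def dsum_add_def add.commute)

lemma dsum_add_zero_left:
  assumes "g \<in> dsum_carrier I p"
  shows "dsum_add I p dsum_zero g = g"
  using assms by (auto simp: dsum_add_def dsum_zero_def dsum_carrier_def)

lemma dsum_order:
  assumes g: "g \<in> dsum_carrier I p"
  shows "0 < dsum_order I p g" and "dsum_pow I p (dsum_order I p g) g = dsum_zero"
proof -
  define A where "A = {i. g i \<noteq> 0}"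
  have A: "finite A" "A \<subseteq> I"
    using g by (auto simp: dsum_carrier_def A_def)
  define n where "n = (\<Prod>i\<in>A. p i)"
  have "0 < n"
    unfolding n_def using A dsum_carrier_modulus_pos[OF g] by (auto intro: prod_pos)
  moreover have "dsum_pow I p n g = dsum_zero"
  proof
    fix i
    show "dsum_pow I p n g i = dsum_zero i"
    proof (cases "i \<in> A")
      case True
      then have "p i dvd n"
        unfolding n_def by (rule dvd_prodI[OF A(1)])
      then show ?thesis by (auto simp: dsum_pow_def dsum_zero_def)
    qed (auto simp: dsum_pow_def dsum_zero_def A_def)
  qed
  ultimately have "\<exists>n. 0 < n \<and> dsum_pow I p n g = dsum_zero" by blast
  then have "0 < dsum_order I p g \<and> dsum_pow I p (dsum_order I p g) g = dsum_zero"
    unfolding dsum_order_def by (rule LeastI_ex)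
  then show "0 < dsum_order I p g" and "dsum_pow I p (dsum_order I p g) g = dsum_zero"
    by simp_all
qed

lemma mp_action_dsum_pow:
  assumes action: "mp_action I p M T" and g: "g \<in> dsum_carrier I p" and x: "x \<in> space M"
  shows "T (dsum_pow I p k g) x = (T g ^^ k) x"
proof (induction k)
  case 0
  then show ?case using action x by (simp add: dsum_pow_0 mp_action_def)
next
  case (Suc k)
  have "T (dsum_pow I p (Suc k) g) x = T g (T (dsum_pow I p k g) x)"
    using action g dsum_pow_in_carrier[OF g] x by (simp add: mp_action_def dsum_pow_Suc)
  with Suc.IH show ?case by simp
qed

lemma cocycle_zero:
  assumes action: "mp_action I p M T" and cocycle: "is_cocycle I p M T q"
    and zero: "dsum_zero \<in> dsum_carrier I p"
    and nonzero: "\<forall>x\<in>space M. q dsum_zero x \<noteq> 0"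
  shows "AE x in M. q dsum_zero x = 1"
proof -
  have "AE x in M. q (dsum_add I p dsum_zero dsum_zero) x = q dsum_zero x * q dsum_zero (T dsum_zero x)"
    using cocycle zero by (simp add: is_cocycle_def)
  then show ?thesis
    using AE_space
  proof eventually_elim
    case (elim x)
    then show ?case
      using action nonzero dsum_add_zero_left[OF zero] by (simp add: mp_action_def)
  qed
qed

lemma cocycle_dsum_pow:
  assumes action: "mp_action I p M T" and cocycle: "is_cocycle I p M T q"
    and g: "g \<in> dsum_carrier I p"
    and nonzero: "\<forall>x\<in>space M. q dsum_zero x \<noteq> 0"
  shows "AE x in M. q (dsum_pow I p k g) x = (\<Prod>j<k. q g ((T g ^^ j) x))"
proof (induction k)
  case 0
  show ?case
    using cocycle_zero[OF action cocycle _ nonzero] dsum_pow_in_carrier[OF g, of 0]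
    by (simp add: dsum_pow_0)
next
  case (Suc k)
  have "AE x in M. q (dsum_add I p (dsum_pow I p k g) g) x
          = q (dsum_pow I p k g) x * q g (T (dsum_pow I p k g) x)"
    using cocycle g dsum_pow_in_carrier[OF g] by (simp add: is_cocycle_def)
  with Suc.IH AE_space show ?case
    by eventually_elim (simp add: mp_action_dsum_pow[OF action g] dsum_pow_Suc2)
qed

theorem propositionB1:
  fixes I :: "nat set" and p :: "nat \<Rightarrow> nat"
    and M :: "'a::metric_space measure" and T :: "(nat \<Rightarrow> nat) \<Rightarrow> 'a \<Rightarrow> 'a"
    and q :: "(nat \<Rightarrow> nat) \<Rightarrow> 'a \<Rightarrow> complex" and d :: nat
  assumes primes: "\<forall>i\<in>I. prime (p i)"
    and compact: "compact (UNIV :: 'a set)"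
    and borel: "sets M = sets borel"
    and prob: "prob_space M"
    and action: "mp_action I p M T"
    and ergodic: "ergodic_action I p M T"
    and meas: "\<forall>g\<in>dsum_carrier I p. q g \<in> borel_measurable M"
    and circle: "\<forall>g\<in>dsum_carrier I p. \<forall>x\<in>space M. cmod (q g x) = 1"
    and phase: "phase_poly_lt I p M T d q"
    and cocycle: "is_cocycle I p M T q"
    and g: "g \<in> dsum_carrier I p"
  shows "AE x in M. q g x ^ (dsum_order I p g ^ d) = 1"
proof -
  let ?n = "dsum_order I p g"
  have nonzero: "\<forall>h\<in>dsum_carrier I p. \<forall>x\<in>space M. q h x \<noteq> 0"
    using circle by fastforce
  have zero: "dsum_zero \<in> dsum_carrier I p"
    using dsum_pow_in_carrier[OF g, of 0] by (simp add: dsum_pow_0)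
  have S: "T g \<in> measurable M M" and preserving: "distr M M (T g) = M"
    using action g by (auto simp: mp_action_def)
  have periodic: "\<forall>x\<in>space M. (T g ^^ ?n) x = x"
    using action dsum_order(2)[OF g] by (auto simp: mp_action_def simp flip: mp_action_dsum_pow[OF action g])
  have "AE x in M. (\<Prod>j<?n. q g ((T g ^^ j) x)) = 1"
    using cocycle_dsum_pow[OF action cocycle g, of ?n] cocycle_zero[OF action cocycle zero]
      nonzero zero by (auto simp: dsum_order(2)[OF g])
  moreover have "AE x in M. mderivs T (replicate d g) (q g) x = 1"
    using phase g by (simp add: phase_poly_lt_def set_replicate_conv_if)
  ultimately show ?thesis
    using mderivs_replicate_root_of_unity[where T = T and g = g, OF S preserving periodic] nonzero g by blast
qed

end
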